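(* For every $g\ge 1$, $\det(K_{g+1})=[\det(K_g)]^3\det(A_g)$.
   Context: The graphs $\mathcal{H}_g$ with hubs $v_1,v_2,v_3,v_4$ and orientations $\mathcal{H}_g^e$ are defined recursively. $\mathcal{H}_1$ is the 4-cycle with edges $\{v_1,v_2\},\{v_1,v_3\},\{v_2,v_4\},\{v_3,v_4\}$, oriented $v_1\to v_2$, $v_1\to v_3$, $v_4\to v_2$, $v_3\to v_4$. For $g>1$, take four disjoint copies $\mathcal{H}_{g-1}^{(i)}$, $i=1,\dots,4$, of $\mathcal{H}_{g-1}$, each oriented as a copy of $\mathcal{H}_{g-1}^e$, with hubs $v_k^{(i)}$; identify $v_1^{(1)},v_1^{(4)}$ as $v_1$, $v_2^{(2)},v_1^{(3)}$ as $v_4$, $v_2^{(1)},v_1^{(2)}$ as $v_3$, and $v_2^{(3)},v_2^{(4)}$ as $v_2$; $\mathcal{H}_g^e$ is the union of the copies' orientations. $A_g$ is the skew adjacency matrix of $\mathcal{H}_g^e$: its $(u,v)$ entry is $1$ if $u\to v$ is an arc, $-1$ if $v\to u$ is an arc, and $0$ otherwise. $K_g$ is the submatrix of $A_g$ obtained by deleting the rows and columns corresponding to $v_1$ and $v_2$. *)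

theory Defs
  imports "Jordan_Normal_Form.Determinant"
begin

text \<open>Vertices of H_g are the naturals 0 ..< hnv g. The hubs are
  v1 = 0, v2 = 1, v3 = 2, v4 = 3. Only g >= 1 is meaningful.\<close>

fun hnv :: "nat \<Rightarrow> nat" where
  "hnv 0 = 4"
| "hnv (Suc 0) = 4"
| "hnv (Suc (Suc g)) = 4 * hnv (Suc g) - 4"

text \<open>Embedding of vertex k of copy c (c = 0..3 for copies 1..4) of a graph
  with m vertices into the glued graph.\<close>

definition hemb :: "nat \<Rightarrow> nat \<Rightarrow> nat \<Rightarrow> nat" where
  "hemb m c k =
     (if k = 0 then [0, 2, 3, 0] ! c
      else if k = 1 then [2, 3, 1, 1] ! c
      else 4 + c * (m - 2) + (k - 2))"

text \<open>Arcs (u,v) meaning u -> v of the orientation H_g^e.\<close>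

fun harcs :: "nat \<Rightarrow> (nat \<times> nat) set" where
  "harcs 0 = {}"
| "harcs (Suc 0) = {(0,1), (0,2), (3,1), (2,3)}"
| "harcs (Suc (Suc g)) =
     (\<Union>c<4. (\<lambda>(u,v). (hemb (hnv (Suc g)) c u, hemb (hnv (Suc g)) c v)) ` harcs (Suc g))"

definition skewA :: "nat \<Rightarrow> int mat" where
  "skewA g = mat (hnv g) (hnv g)
     (\<lambda>(u,v). if (u,v) \<in> harcs g then 1 else if (v,u) \<in> harcs g then -1 else 0)"

definition Kmat :: "nat \<Rightarrow> int mat" where
  "Kmat g = mat (hnv g - 2) (hnv g - 2) (\<lambda>(i,j). skewA g $$ (i + 2, j + 2))"

end

theory Submission
  imports Defs
begin

text \<open>In H_{g+1} the hubs of the fourth copy are v_1 and v_2, so once they are deleted its interior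
  decouples: K_{g+1} is block diagonal with blocks M and K_g, where M lives on v_3, v_4 and the
  interiors of the first three copies. Listing v_1, v_2 first, A_g is K_g bordered by the rows x, y of
  v_1, v_2. Likewise M is diag(K_g, K_g, K_g) bordered by the same 2x2 hub block and by x, y placed
  along a chain, because v_3 is v_2 of copy 1 and v_1 of copy 2, and v_4 is v_2 of copy 2 and v_1 of
  copy 3. If K_g is invertible, the Schur complements of A_g and of M with respect to their K_g-blocks
  coincide, since the quadratic forms u^T K_g^{-1} u of the skew-symmetric inverse vanish; hence
  det M = det(K_g)^2 det A_g. If det K_g = 0, both sides of the claim vanish.\<close>

section \<open>Determinants of skew-bordered block matrices\<close>

lemma det_four_block_mat_schur:
  fixes B :: "'a :: field mat"
  assumes B: "B \<in> carrier_mat p p" and C: "C \<in> carrier_mat p q"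
    and C': "C' \<in> carrier_mat q p" and D: "D \<in> carrier_mat q q"
    and E: "E \<in> carrier_mat q q" and DE: "D * E = 1\<^sub>m q"
  shows "det (four_block_mat B C C' D) = det D * det (B - C * E * C')"
proof -
  let ?N = "four_block_mat (1\<^sub>m p) (0\<^sub>m p q) (- (E * C')) (1\<^sub>m q)"
  have EC': "E * C' \<in> carrier_mat q p" using E C' by auto
  have "D * (E * C') = C'"
    using D E C' by (simp add: assoc_mult_mat[symmetric, of D q q E q C' p] DE)
  then have "four_block_mat B C C' D * ?N = four_block_mat (B - C * E * C') C (0\<^sub>m q p) D"
    using B C C' D E EC'
    by (subst mult_four_block_mat[OF B C C' D], auto simp: minus_add_uminus_mat
        mult_minus_distrib_mat uminus_mult_right_mat assoc_mult_mat[of C p q E q C' p])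
  moreover have "det ?N = 1"
    using EC' by (subst det_four_block_mat_upper_right_zero[of _ p _ q]) auto
  ultimately have "det (four_block_mat B C C' D)
      = det (four_block_mat (B - C * E * C') C (0\<^sub>m q p) D)"
    using det_mult[of "four_block_mat B C C' D" "p + q" ?N] B C C' D EC' by simp
  also have "\<dots> = det (B - C * E * C') * det D"
    using B C E C' D by (intro det_four_block_mat_lower_left_zero) auto
  finally show ?thesis by (simp add: mult.commute)
qed

lemma det_nonzero_imp_right_inverse:
  fixes K :: "'a :: field mat"
  assumes K: "K \<in> carrier_mat n n" and det: "det K \<noteq> 0"
  obtains E where "E \<in> carrier_mat n n" "K * E = 1\<^sub>m n"
proof
  let ?E = "inverse (det K) \<cdot>\<^sub>m adj_mat K"
  show "?E \<in> carrier_mat n n" using adj_mat(1)[OF K] by simp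
  have "K * ?E = inverse (det K) \<cdot>\<^sub>m (det K \<cdot>\<^sub>m 1\<^sub>m n)"
    by (simp add: mult_smult_distrib[OF K adj_mat(1)[OF K]] adj_mat(2)[OF K])
  also have "\<dots> = 1\<^sub>m n" using det by (intro eq_matI) auto
  finally show "K * ?E = 1\<^sub>m n" .
qed

lemma right_inverse_of_skew_is_skew:
  fixes K :: "'a :: comm_ring_1 mat"
  assumes K: "K \<in> carrier_mat n n" and E: "E \<in> carrier_mat n n"
    and KE: "K * E = 1\<^sub>m n" and skew: "transpose_mat K = - K"
  shows "transpose_mat E = - E"
proof -
  have "transpose_mat E * transpose_mat K = 1\<^sub>m n"
    using transpose_mult[OF K E] KE by simp
  then have left_inv: "(- transpose_mat E) * K = 1\<^sub>m n"
    using K E skew by (simp add: uminus_mult_left_mat uminus_mult_right_mat)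
  have "- transpose_mat E = ((- transpose_mat E) * K) * E"
    using K E by (simp add: assoc_mult_mat[of _ n n K n E n] KE)
  also have "\<dots> = E" using E by (simp add: left_inv)
  finally show ?thesis by (metis uminus_uminus_mat)
qed

definition bilinear_form ::
    "'a :: comm_ring_1 mat \<Rightarrow> nat \<Rightarrow> (nat \<Rightarrow> 'a) \<Rightarrow> (nat \<Rightarrow> 'a) \<Rightarrow> 'a" where
  "bilinear_form E n u w = (\<Sum>p<n. u p * (\<Sum>q<n. E $$ (p, q) * w q))"

lemma bilinear_form_cong:
  "(\<And>p. p < n \<Longrightarrow> u p = u' p) \<Longrightarrow> (\<And>p. p < n \<Longrightarrow> w p = w' p) \<Longrightarrow>
    bilinear_form E n u w = bilinear_form E n u' w'"
  unfolding bilinear_form_def by (auto intro!: sum.cong)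

lemma bilinear_form_zero [simp]:
  "bilinear_form E n (\<lambda>_. 0) w = 0" "bilinear_form E n u (\<lambda>_. 0) = 0"
  unfolding bilinear_form_def by simp_all

lemma bilinear_form_skew_self:
  fixes E :: "'a :: field_char_0 mat"
  assumes E: "E \<in> carrier_mat n n" and skew: "transpose_mat E = - E"
  shows "bilinear_form E n u u = 0"
proof -
  have entry: "E $$ (p, q) = - E $$ (q, p)" if "p < n" "q < n" for p q
    using arg_cong[OF skew, of "\<lambda>M. M $$ (q, p)"] E that by simp
  have "bilinear_form E n u u = (\<Sum>q<n. \<Sum>p<n. u p * E $$ (p, q) * u q)"
    unfolding bilinear_form_def by (subst sum.swap) (simp add: sum_distrib_left mult.assoc)
  also have "\<dots> = (\<Sum>q<n. \<Sum>p<n. - (u q * E $$ (q, p) * u p))"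
  proof (intro sum.cong refl)
    fix q p assume "q \<in> {..<n}" "p \<in> {..<n}"
    then show "u p * E $$ (p, q) * u q = - (u q * E $$ (q, p) * u p)"
      using entry[of p q] by simp
  qed
  also have "\<dots> = - bilinear_form E n u u"
    unfolding bilinear_form_def by (simp add: sum_distrib_left sum_negf mult.assoc)
  finally show ?thesis by simp
qed

lemma sum_lessThan_mult_blocks:
  fixes f :: "nat \<Rightarrow> 'a :: comm_monoid_add"
  shows "(\<Sum>q < k * n. f q) = (\<Sum>d < k. \<Sum>q < n. f (q + d * n))"
proof -
  have "(\<Sum>q < n. f (q + d * n)) = sum f {d * n..<d * n + n}" for d
    using sum.shift_bounds_nat_ivl[of f 0 "d * n" n] by (simp add: lessThan_atLeast0 add.commute)
  then show ?thesis using sum.nat_group[of f n k] by (simp add: mult.commute)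
qed

lemma block_index_less:
  assumes "t < n" "d < k"
  shows "t + d * n < k * (n :: nat)"
proof -
  have "Suc d * n \<le> k * n" using assms(2) by (intro mult_le_mono1) simp
  then show ?thesis using assms(1) by simp
qed

definition skew_border_mat :: "'a :: comm_ring_1 mat \<Rightarrow> 'a mat \<Rightarrow> 'a mat \<Rightarrow> 'a mat" where
  "skew_border_mat B R D = four_block_mat B R (- transpose_mat R) D"

lemma index_skew_border_mat:
  assumes "B \<in> carrier_mat p p" "R \<in> carrier_mat p q" "D \<in> carrier_mat q q"
  shows "i < p \<Longrightarrow> j < p \<Longrightarrow> skew_border_mat B R D $$ (i, j) = B $$ (i, j)"
    and "i < p \<Longrightarrow> j < q \<Longrightarrow> skew_border_mat B R D $$ (i, p + j) = R $$ (i, j)"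
    and "i < q \<Longrightarrow> j < p \<Longrightarrow> skew_border_mat B R D $$ (p + i, j) = - R $$ (j, i)"
    and "i < q \<Longrightarrow> j < q \<Longrightarrow> skew_border_mat B R D $$ (p + i, p + j) = D $$ (i, j)"
  using assms by (simp_all add: skew_border_mat_def)

lemma det_skew_border_mat:
  fixes B :: "'a :: field mat"
  assumes B: "B \<in> carrier_mat p p" and R: "R \<in> carrier_mat p q" and D: "D \<in> carrier_mat q q"
    and E: "E \<in> carrier_mat q q" and DE: "D * E = 1\<^sub>m q"
  shows "det (skew_border_mat B R D) = det D * det (B + R * E * transpose_mat R)"
proof -
  have "B - R * E * (- transpose_mat R) = B + R * E * transpose_mat R"
    using B R E by (simp add: uminus_mult_right_mat minus_add_uminus_mat)
  then show ?thesis
    unfolding skew_border_mat_def using B R D E DE by (subst det_four_block_mat_schur) auto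
qed

lemma index_schur_complement:
  assumes "B \<in> carrier_mat p p" "R \<in> carrier_mat p q" "E \<in> carrier_mat q q" "i < p" "j < p"
  shows "(B + R * E * transpose_mat R) $$ (i, j)
    = B $$ (i, j) + bilinear_form E q (\<lambda>k. R $$ (i, k)) (\<lambda>k. R $$ (j, k))"
  using assms by (simp add: bilinear_form_def scalar_prod_def atLeast0LessThan)

definition diag3_mat :: "'a :: zero mat \<Rightarrow> 'a mat" where
  "diag3_mat K = four_block_mat K (0\<^sub>m (dim_row K) (2 * dim_col K)) (0\<^sub>m (2 * dim_row K) (dim_col K))
     (four_block_mat K (0\<^sub>m (dim_row K) (dim_col K)) (0\<^sub>m (dim_row K) (dim_col K)) K)"

lemma diag3_mat_carrier [simp]: "K \<in> carrier_mat n m \<Longrightarrow> diag3_mat K \<in> carrier_mat (3 * n) (3 * m)"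
  unfolding diag3_mat_def by auto

lemma index_diag3_mat:
  assumes K: "K \<in> carrier_mat n m" and "p < n" "r < m" "c < 3" "d < 3"
  shows "diag3_mat K $$ (p + c * n, r + d * m) = (if c = d then K $$ (p, r) else 0)"
proof -
  have "c = 0 \<or> c = 1 \<or> c = 2" "d = 0 \<or> d = 1 \<or> d = 2" using assms by auto
  then show ?thesis using assms unfolding diag3_mat_def by auto
qed

lemma diag3_mat_mult:
  assumes A: "A \<in> carrier_mat n m" and B: "B \<in> carrier_mat m k"
  shows "diag3_mat A * diag3_mat B = diag3_mat (A * B)"
proof -
  have "four_block_mat A (0\<^sub>m n m) (0\<^sub>m n m) A * four_block_mat B (0\<^sub>m m k) (0\<^sub>m m k) B
      = four_block_mat (A * B) (0\<^sub>m n k) (0\<^sub>m n k) (A * B)"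
    using A B by (subst mult_four_block_mat[of A n m _ m _ n _ B k _ k]) auto
  moreover have "four_block_mat A (0\<^sub>m n m) (0\<^sub>m n m) A \<in> carrier_mat (2 * n) (2 * m)"
    "four_block_mat B (0\<^sub>m m k) (0\<^sub>m m k) B \<in> carrier_mat (2 * m) (2 * k)"
    using A B by (auto simp: mult_2)
  ultimately show ?thesis
    using A B unfolding diag3_mat_def
    by (subst mult_four_block_mat[of A n m _ "2 * m" _ "2 * n" _ B k _ "2 * k"]) auto
qed

lemma diag3_mat_one [simp]: "diag3_mat (1\<^sub>m n) = 1\<^sub>m (3 * n)"
  by (rule eq_matI) (auto simp: diag3_mat_def)

lemma det_diag3_mat:
  fixes K :: "'a :: idom mat"
  assumes K: "K \<in> carrier_mat n n"
  shows "det (diag3_mat K) = det K ^ 3"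
proof -
  have inner: "four_block_mat K (0\<^sub>m n n) (0\<^sub>m n n) K \<in> carrier_mat (2 * n) (2 * n)"
    using K by (auto simp: mult_2)
  have "det (four_block_mat K (0\<^sub>m n n) (0\<^sub>m n n) K) = det K * det K"
    using K by (intro det_four_block_mat_lower_left_zero) auto
  then show ?thesis
    using K unfolding diag3_mat_def
    by (simp add: det_four_block_mat_lower_left_zero[OF K _ refl inner] power3_eq_cube)
qed

definition hub_block :: "'a :: comm_ring_1 \<Rightarrow> 'a mat" where
  "hub_block a = mat 2 2 (\<lambda>(i, j). if i = 0 \<and> j = 1 then a else if i = 1 \<and> j = 0 then - a else 0)"

definition border_rows :: "(nat \<Rightarrow> 'a) \<Rightarrow> (nat \<Rightarrow> 'a) \<Rightarrow> nat \<Rightarrow> 'a mat" where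
  "border_rows x y n = mat 2 n (\<lambda>(i, p). if i = 0 then x p else y p)"

text \<open>Copies are indexed from 0 here. Row i is the hub v_{3+i} of H_{g+1}: it is v_2 of copy i,
  where it carries the row y of v_2, and v_1 of copy i+1, where it carries the row x of v_1.\<close>

definition chain_rows :: "(nat \<Rightarrow> 'a :: zero) \<Rightarrow> (nat \<Rightarrow> 'a) \<Rightarrow> nat \<Rightarrow> 'a mat" where
  "chain_rows x y n = mat 2 (3 * n) (\<lambda>(i, p).
     if p div n = i then y (p mod n) else if p div n = Suc i then x (p mod n) else 0)"

definition bordered_mat ::
    "'a :: comm_ring_1 \<Rightarrow> (nat \<Rightarrow> 'a) \<Rightarrow> (nat \<Rightarrow> 'a) \<Rightarrow> 'a mat \<Rightarrow> 'a mat" where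
  "bordered_mat a x y K = skew_border_mat (hub_block a) (border_rows x y (dim_row K)) K"

definition chained_mat ::
    "'a :: comm_ring_1 \<Rightarrow> (nat \<Rightarrow> 'a) \<Rightarrow> (nat \<Rightarrow> 'a) \<Rightarrow> 'a mat \<Rightarrow> 'a mat" where
  "chained_mat a x y K = skew_border_mat (hub_block a) (chain_rows x y (dim_row K)) (diag3_mat K)"

lemma hub_block_carrier [simp]: "hub_block a \<in> carrier_mat 2 2"
  by (simp add: hub_block_def)

lemma border_rows_carrier [simp]: "border_rows x y n \<in> carrier_mat 2 n"
  by (simp add: border_rows_def)

lemma chain_rows_carrier [simp]: "chain_rows x y n \<in> carrier_mat 2 (3 * n)"
  by (simp add: chain_rows_def)

lemma bordered_mat_carrier:
  assumes "K \<in> carrier_mat n n"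
  shows "bordered_mat a x y K \<in> carrier_mat (2 + n) (2 + n)"
  using four_block_carrier_mat[OF hub_block_carrier assms] assms
  by (simp add: bordered_mat_def skew_border_mat_def)

lemma chained_mat_carrier:
  assumes "K \<in> carrier_mat n n"
  shows "chained_mat a x y K \<in> carrier_mat (2 + 3 * n) (2 + 3 * n)"
  using four_block_carrier_mat[OF hub_block_carrier diag3_mat_carrier[OF assms]] assms
  by (simp add: chained_mat_def skew_border_mat_def)

lemma index_chain_rows:
  assumes "i < 2" "t < n" "d < 3"
  shows "chain_rows x y n $$ (i, t + d * n) = (if d = i then y t else if d = Suc i then x t else 0)"
proof -
  define p where "p = t + d * n"
  have "p < 3 * n"
    unfolding p_def using block_index_less assms by blast
  moreover have "p div n = d" "p mod n = t"
    unfolding p_def using assms by auto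
  ultimately show ?thesis
    unfolding p_def[symmetric] chain_rows_def using assms by simp
qed

lemma index_bordered_mat:
  assumes K: "K \<in> carrier_mat n n"
  shows "h < 2 \<Longrightarrow> h' < 2 \<Longrightarrow> bordered_mat a x y K $$ (h, h') = hub_block a $$ (h, h')"
    and "h < 2 \<Longrightarrow> t < n \<Longrightarrow> bordered_mat a x y K $$ (h, 2 + t) = (if h = 0 then x t else y t)"
    and "t < n \<Longrightarrow> h < 2 \<Longrightarrow> bordered_mat a x y K $$ (2 + t, h) = - (if h = 0 then x t else y t)"
    and "t < n \<Longrightarrow> t' < n \<Longrightarrow> bordered_mat a x y K $$ (2 + t, 2 + t') = K $$ (t, t')"
  using K index_skew_border_mat[OF hub_block_carrier border_rows_carrier K]
  by (simp_all add: bordered_mat_def border_rows_def)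

lemma index_four_block_chained_mat:
  fixes K :: "'a :: comm_ring_1 mat" and n :: nat and a :: 'a and x y :: "nat \<Rightarrow> 'a"
  defines "F \<equiv> four_block_mat (chained_mat a x y K) (0\<^sub>m (2 + 3 * n) n) (0\<^sub>m n (2 + 3 * n)) K"
  assumes K: "K \<in> carrier_mat n n"
  shows "h < 2 \<Longrightarrow> h' < 2 \<Longrightarrow> F $$ (h, h') = hub_block a $$ (h, h')"
    and "h < 2 \<Longrightarrow> d < 4 \<Longrightarrow> t < n \<Longrightarrow>
      F $$ (h, 2 + d * n + t) = (if d = h then y t else if d = Suc h then x t else 0)"
    and "h < 2 \<Longrightarrow> d < 4 \<Longrightarrow> t < n \<Longrightarrow>
      F $$ (2 + d * n + t, h) = - (if d = h then y t else if d = Suc h then x t else 0)"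
    and "d < 4 \<Longrightarrow> d' < 4 \<Longrightarrow> t < n \<Longrightarrow> t' < n \<Longrightarrow>
      F $$ (2 + d * n + t, 2 + d' * n + t') = (if d = d' then K $$ (t, t') else 0)"
proof -
  let ?C = "skew_border_mat (hub_block a) (chain_rows x y n) (diag3_mat K)"
  have C: "?C \<in> carrier_mat (2 + 3 * n) (2 + 3 * n)"
    unfolding skew_border_mat_def
    using four_block_carrier_mat[OF hub_block_carrier diag3_mat_carrier[OF K]] .
  have F: "F = four_block_mat ?C (0\<^sub>m (2 + 3 * n) n) (0\<^sub>m n (2 + 3 * n)) K"
    unfolding F_def chained_mat_def using K by simp
  have F_C: "F $$ (i, j) = ?C $$ (i, j)" if "i < 2 + 3 * n" "j < 2 + 3 * n" for i j
    using that C K unfolding F by simp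
  have F_zero: "F $$ (i, 2 + 3 * n + j) = 0" "F $$ (2 + 3 * n + j, i) = 0"
    if "i < 2 + 3 * n" "j < n" for i j
    using that C K unfolding F by simp_all
  have F_K: "F $$ (2 + 3 * n + i, 2 + 3 * n + j) = K $$ (i, j)" if "i < n" "j < n" for i j
    using that C K unfolding F by simp
  note C_index = index_skew_border_mat[OF hub_block_carrier chain_rows_carrier diag3_mat_carrier[OF K]]
  have interior: "2 + e * n + s = 2 + (s + e * n)" "2 + (s + e * n) < 2 + 3 * n"
    if "e < 3" "s < n" for e s
    using block_index_less[OF that(2,1)] by simp_all
  have last: "2 + e * n + s = 2 + 3 * n + s" if "\<not> e < 3" "e < 4" for e s
    using that by (simp add: not_less_eq)
  show "F $$ (h, h') = hub_block a $$ (h, h')" if "h < 2" "h' < 2" for h h'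
    using that F_C C_index(1) by simp
  show "F $$ (h, 2 + d * n + t) = (if d = h then y t else if d = Suc h then x t else 0)"
    if h: "h < 2" and d: "d < 4" and t: "t < n" for h d t
  proof (cases "d < 3")
    case True
    then have "F $$ (h, 2 + d * n + t) = chain_rows x y n $$ (h, t + d * n)"
      using h t F_C C_index(2) block_index_less[OF t True] interior[OF True t]
      by (simp add: add.commute)
    also have "\<dots> = (if d = h then y t else if d = Suc h then x t else 0)"
      by (rule index_chain_rows[OF h t True])
    finally show ?thesis .
  next
    case False
    then show ?thesis using h t F_zero(1) last[OF False d] by simp
  qed
  show "F $$ (2 + d * n + t, h) = - (if d = h then y t else if d = Suc h then x t else 0)"
    if h: "h < 2" and d: "d < 4" and t: "t < n" for h d t
  proof (cases "d < 3")
    case True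
    then have "F $$ (2 + d * n + t, h) = - chain_rows x y n $$ (h, t + d * n)"
      using h t F_C C_index(3) block_index_less[OF t True] interior[OF True t]
      by (simp add: add.commute)
    also have "\<dots> = - (if d = h then y t else if d = Suc h then x t else 0)"
      by (simp only: index_chain_rows[OF h t True])
    finally show ?thesis .
  next
    case False
    then show ?thesis using h t F_zero(2) last[OF False d] by simp
  qed
  show "F $$ (2 + d * n + t, 2 + d' * n + t') = (if d = d' then K $$ (t, t') else 0)"
    if d: "d < 4" "d' < 4" and t: "t < n" "t' < n" for d d' t t'
  proof -
    consider "d < 3" "d' < 3" | "d < 3" "\<not> d' < 3" | "\<not> d < 3" "d' < 3" | "\<not> d < 3" "\<not> d' < 3"
      by blast
    then show ?thesis
    proof cases
      case 1
      then have "F $$ (2 + d * n + t, 2 + d' * n + t') = diag3_mat K $$ (t + d * n, t' + d' * n)"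
        using t F_C C_index(4) block_index_less[OF t(1)] block_index_less[OF t(2)]
          interior[OF 1(1) t(1)] interior[OF 1(2) t(2)] by (simp add: add.commute)
      also have "\<dots> = (if d = d' then K $$ (t, t') else 0)"
        by (rule index_diag3_mat[OF K t 1])
      finally show ?thesis .
    next
      case 2
      then show ?thesis using t F_zero(1) interior[OF 2(1) t(1)] last[OF 2(2) d(2)] by auto
    next
      case 3
      then show ?thesis using t F_zero(2) interior[OF 3(2) t(2)] last[OF 3(1) d(1)] by auto
    next
      case 4
      then show ?thesis using t F_K last[OF 4(1) d(1)] last[OF 4(2) d(2)] by simp
    qed
  qed
qed

lemma bilinear_form_diag3_mat:
  assumes E: "E \<in> carrier_mat n n"
  shows "bilinear_form (diag3_mat E) (3 * n) u w
    = (\<Sum>d<3. bilinear_form E n (\<lambda>p. u (p + d * n)) (\<lambda>p. w (p + d * n)))"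
proof -
  have "(\<Sum>q<3 * n. diag3_mat E $$ (p + c * n, q) * w q) = (\<Sum>q<n. E $$ (p, q) * w (q + c * n))"
    if "p < n" "c < 3" for p c
  proof -
    have "(\<Sum>q<3 * n. diag3_mat E $$ (p + c * n, q) * w q)
        = (\<Sum>d<3. if d = c then \<Sum>q<n. E $$ (p, q) * w (q + d * n) else 0)"
      unfolding sum_lessThan_mult_blocks using that E by (intro sum.cong) (auto simp: index_diag3_mat)
    then show ?thesis using that by simp
  qed
  then show ?thesis
    unfolding bilinear_form_def by (simp add: sum_lessThan_mult_blocks)
qed

lemma det_chained_mat:
  fixes K :: "'a :: field_char_0 mat"
  assumes K: "K \<in> carrier_mat n n" and skew: "transpose_mat K = - K" and det: "det K \<noteq> 0"
  shows "det (chained_mat a x y K) = det K ^ 2 * det (bordered_mat a x y K)"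
proof -
  obtain E where E: "E \<in> carrier_mat n n" and KE: "K * E = 1\<^sub>m n"
    using det_nonzero_imp_right_inverse[OF K det] .
  have skew_E: "transpose_mat E = - E"
    by (rule right_inverse_of_skew_is_skew[OF K E KE skew])
  let ?R = "border_rows x y n" and ?R3 = "chain_rows x y n"
  let ?S = "hub_block a + ?R * E * transpose_mat ?R"
  let ?S3 = "hub_block a + ?R3 * diag3_mat E * transpose_mat ?R3"
  note B = hub_block_carrier and R = border_rows_carrier and R3 = chain_rows_carrier
  have "det (bordered_mat a x y K) = det K * det ?S"
    unfolding bordered_mat_def using K by (simp add: det_skew_border_mat[OF B R K E KE])
  moreover have "det (chained_mat a x y K) = det K ^ 3 * det ?S3"
    unfolding chained_mat_def using K det_diag3_mat[OF K] diag3_mat_mult[OF K E]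
    by (simp add: KE det_skew_border_mat[OF B R3 diag3_mat_carrier[OF K] diag3_mat_carrier[OF E]])
  moreover have "?S3 = ?S"
  proof (rule eq_matI)
    fix i j assume "i < dim_row ?S" "j < dim_col ?S"
    then have ij: "i < 2" "j < 2" by (simp_all add: border_rows_def)
    have chain: "bilinear_form E n (\<lambda>p. ?R3 $$ (i, p + d * n)) (\<lambda>p. ?R3 $$ (j, p + d * n))
      = bilinear_form E n (\<lambda>p. if d = i then y p else if d = Suc i then x p else 0)
          (\<lambda>p. if d = j then y p else if d = Suc j then x p else 0)" if "d < 3" for d
      using ij that by (intro bilinear_form_cong) (simp_all add: index_chain_rows)
    have "?S3 $$ (i, j) = hub_block a $$ (i, j)
        + (\<Sum>d<3. bilinear_form E n (\<lambda>p. ?R3 $$ (i, p + d * n)) (\<lambda>p. ?R3 $$ (j, p + d * n)))"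
      using ij E by (simp add: index_schur_complement[OF B R3] bilinear_form_diag3_mat)
    also have "\<dots> = hub_block a $$ (i, j) + bilinear_form E n (\<lambda>p. ?R $$ (i, p)) (\<lambda>p. ?R $$ (j, p))"
      using ij by (auto simp: chain numeral_3_eq_3 border_rows_def less_2_cases_iff
          bilinear_form_skew_self[OF E skew_E] intro!: bilinear_form_cong)
    also have "\<dots> = ?S $$ (i, j)"
      using ij by (simp add: index_schur_complement[OF B R E])
    finally show "?S3 $$ (i, j) = ?S $$ (i, j)" .
  qed (simp_all add: border_rows_def chain_rows_def)
  ultimately show ?thesis
    by (simp add: power2_eq_square power3_eq_cube)
qed

context comm_ring_hom
begin

lemma map_mat_skew_border_mat:
  assumes "B \<in> carrier_mat p p" "R \<in> carrier_mat p q" "D \<in> carrier_mat q q"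
  shows "map_mat hom (skew_border_mat B R D)
    = skew_border_mat (map_mat hom B) (map_mat hom R) (map_mat hom D)"
  using assms unfolding skew_border_mat_def by (intro eq_matI) (auto simp: hom_uminus)

lemma map_mat_hub_block: "map_mat hom (hub_block a) = hub_block (hom a)"
  unfolding hub_block_def by (intro eq_matI) (auto simp: hom_uminus)

lemma map_mat_border_rows: "map_mat hom (border_rows x y n) = border_rows (hom \<circ> x) (hom \<circ> y) n"
  unfolding border_rows_def by (intro eq_matI) auto

lemma map_mat_chain_rows: "map_mat hom (chain_rows x y n) = chain_rows (hom \<circ> x) (hom \<circ> y) n"
  unfolding chain_rows_def by (intro eq_matI) auto

lemma map_mat_diag3_mat: "map_mat hom (diag3_mat K) = diag3_mat (map_mat hom K)"
  unfolding diag3_mat_def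
  by (subst map_four_block_mat[of _ "dim_row K" "dim_col K" _ "2 * dim_col K" _ "2 * dim_row K"])
    (auto simp: map_four_block_mat[of _ "dim_row K" "dim_col K" _ "dim_col K" _ "dim_row K"] mult_2)

lemma map_mat_bordered_mat:
  assumes "K \<in> carrier_mat n n"
  shows "map_mat hom (bordered_mat a x y K) = bordered_mat (hom a) (hom \<circ> x) (hom \<circ> y) (map_mat hom K)"
  using assms unfolding bordered_mat_def
  by (simp add: map_mat_skew_border_mat[of _ 2 _ n] map_mat_hub_block map_mat_border_rows)

lemma map_mat_chained_mat:
  assumes "K \<in> carrier_mat n n"
  shows "map_mat hom (chained_mat a x y K) = chained_mat (hom a) (hom \<circ> x) (hom \<circ> y) (map_mat hom K)"
  using assms unfolding chained_mat_def
  by (simp add: map_mat_skew_border_mat[of _ 2 _ "3 * n"] map_mat_hub_block map_mat_chain_rows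
      map_mat_diag3_mat)

end

lemma det_chained_mat_int:
  fixes K :: "int mat"
  assumes K: "K \<in> carrier_mat n n" and skew: "transpose_mat K = - K"
  shows "det (chained_mat a x y K) * det K = det K ^ 3 * det (bordered_mat a x y K)"
proof (cases "det K = 0")
  case False
  let ?h = "of_int :: int \<Rightarrow> rat"
  have "transpose_mat (map_mat ?h K) = - map_mat ?h K"
  proof (rule eq_matI)
    fix i j assume "i < dim_row (- map_mat ?h K)" "j < dim_col (- map_mat ?h K)"
    then show "transpose_mat (map_mat ?h K) $$ (i, j) = (- map_mat ?h K) $$ (i, j)"
      using K arg_cong[OF skew, of "\<lambda>M. M $$ (i, j)"] by simp
  qed (use K in auto)
  then have "det (map_mat ?h (chained_mat a x y K))
      = det (map_mat ?h K) ^ 2 * det (map_mat ?h (bordered_mat a x y K))"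
    using K False
    by (simp add: of_int_hom.map_mat_chained_mat[OF K] of_int_hom.map_mat_bordered_mat[OF K]
        det_chained_mat[of _ n])
  then have "?h (det (chained_mat a x y K)) = ?h (det K ^ 2 * det (bordered_mat a x y K))"
    by simp
  then have "det (chained_mat a x y K) = det K ^ 2 * det (bordered_mat a x y K)"
    by (simp only: of_int_eq_iff)
  then show ?thesis by (simp add: power2_eq_square power3_eq_cube)
qed simp

section \<open>Vertices and arcs of the glued graph\<close>

lemma hnv_Suc_ge_4: "4 \<le> hnv (Suc g)"
  by (induction g) auto

lemma hemb_interior: "2 \<le> k \<Longrightarrow> hemb m c k = 4 + c * (m - 2) + (k - 2)"
  by (simp add: hemb_def)

lemma hemb_hub_le_3: "k < 2 \<Longrightarrow> c < 4 \<Longrightarrow> hemb m c k \<le> 3"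
  by (auto simp: hemb_def less_2_cases_iff less_Suc_eq numeral_eq_Suc)

lemma hemb_less:
  assumes "2 \<le> m" "c < 4" "k < m"
  shows "hemb m c k < 4 * m - 4"
proof (cases "k < 2")
  case True
  then show ?thesis using hemb_hub_le_3[OF True assms(2), of m] assms(1) by linarith
next
  case False
  have "c * (m - 2) \<le> 3 * (m - 2)" using assms by simp
  moreover have "hemb m c k = 4 + c * (m - 2) + (k - 2)" using False by (simp add: hemb_interior)
  ultimately show ?thesis using False assms by linarith
qed

lemma hemb_inj:
  assumes "c < 4" "hemb m c k = hemb m c l"
  shows "k = l"
proof -
  consider "k < 2" "l < 2" | "k < 2" "2 \<le> l" | "2 \<le> k" "l < 2" | "2 \<le> k" "2 \<le> l"
    by linarith
  then show ?thesis
  proof cases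
    case 1
    then show ?thesis using assms by (auto simp: hemb_def less_2_cases_iff less_Suc_eq numeral_eq_Suc)
  qed (use assms hemb_hub_le_3[of _ c m] hemb_interior[of _ m c] in fastforce)+
qed

lemma hemb_eq_interior_iff:
  assumes "c < 4" "k < m" "t < m - 2"
  shows "hemb m c k = 4 + d * (m - 2) + t \<longleftrightarrow> c = d \<and> k = t + 2"
proof
  assume eq: "hemb m c k = 4 + d * (m - 2) + t"
  then have k: "2 \<le> k" using hemb_hub_le_3[of k c m] assms by linarith
  then have "(k - 2) + c * (m - 2) = t + d * (m - 2)" using eq by (simp add: hemb_interior)
  moreover have "k - 2 < m - 2" using k assms by simp
  ultimately have "c = d"
    using assms by (metis add.commute div_mult_self1 div_less gr_implies_not0 add_0)
  then show "c = d \<and> k = t + 2" using eq k by (simp add: hemb_interior)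
qed (simp add: hemb_interior)

lemma hemb_eq_imp_hubs:
  assumes "c < 4" "c' < 4" "c \<noteq> c'" "k < m" "k' < m" "hemb m c k = hemb m c' k'"
  shows "k < 2 \<and> k' < 2"
proof (rule ccontr)
  assume "\<not> (k < 2 \<and> k' < 2)"
  then consider "2 \<le> k" | "2 \<le> k'" by linarith
  then show False
  proof cases
    case 1
    have "k - 2 < m - 2" using 1 assms by simp
    moreover have "hemb m c' k' = 4 + c * (m - 2) + (k - 2)"
      using 1 assms(6) by (simp add: hemb_interior)
    ultimately have "c' = c" using hemb_eq_interior_iff[OF assms(2,5)] by blast
    then show False using assms(3) by simp
  next
    case 2
    have "k' - 2 < m - 2" using 2 assms by simp
    moreover have "hemb m c k = 4 + c' * (m - 2) + (k' - 2)"
      using 2 assms(6) by (simp add: hemb_interior)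
    ultimately have "c = c'" using hemb_eq_interior_iff[OF assms(1,4)] by blast
    then show False using assms(3) by simp
  qed
qed

lemma copies_share_at_most_one_hub:
  assumes "c < 4" "c' < 4" "c \<noteq> c'" "k < 2" "l < 2" "k \<noteq> l" "k' < 2" "l' < 2"
    and "hemb m c k = hemb m c' k'" "hemb m c l = hemb m c' l'"
  shows False
  using assms by (auto simp: hemb_def less_2_cases_iff less_Suc_eq numeral_eq_Suc)

lemma hemb_eq_hub_iff:
  assumes "h < 2" "c < 4"
  shows "hemb m c k = 2 + h \<longleftrightarrow> (c = h \<and> k = 1) \<or> (c = Suc h \<and> k = 0)"
proof (cases "k < 2")
  case True
  then show ?thesis using assms by (auto simp: hemb_def less_2_cases_iff less_Suc_eq numeral_eq_Suc)
next
  case False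
  then show ?thesis using assms by (simp add: hemb_interior)
qed

definition oriented_graph :: "nat \<Rightarrow> (nat \<times> nat) set \<Rightarrow> bool" where
  "oriented_graph n E \<longleftrightarrow> E \<subseteq> {..<n} \<times> {..<n} \<and> (\<forall>u v. (u, v) \<in> E \<longrightarrow> (v, u) \<notin> E)"

lemma mem_harcs_Suc_Suc:
  "(u, v) \<in> harcs (Suc (Suc g)) \<longleftrightarrow>
    (\<exists>c<4. \<exists>k l. (k, l) \<in> harcs (Suc g) \<and> u = hemb (hnv (Suc g)) c k \<and> v = hemb (hnv (Suc g)) c l)"
  by (simp only: harcs.simps(3)) force

lemma hemb_mem_harcs_Suc_Suc_iff:
  assumes G: "oriented_graph (hnv (Suc g)) (harcs (Suc g))"
    and c: "c < 4" and k: "k < hnv (Suc g)" and l: "l < hnv (Suc g)"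
  shows "(hemb (hnv (Suc g)) c k, hemb (hnv (Suc g)) c l) \<in> harcs (Suc (Suc g))
    \<longleftrightarrow> (k, l) \<in> harcs (Suc g)"
proof
  let ?m = "hnv (Suc g)"
  assume "(hemb ?m c k, hemb ?m c l) \<in> harcs (Suc (Suc g))"
  then obtain c' k' l' where arc: "(k', l') \<in> harcs (Suc g)" "c' < 4"
    and eq: "hemb ?m c k = hemb ?m c' k'" "hemb ?m c l = hemb ?m c' l'"
    unfolding mem_harcs_Suc_Suc by blast
  have k'l': "k' < ?m" "l' < ?m" "(l', k') \<notin> harcs (Suc g)"
    using G arc(1) unfolding oriented_graph_def by auto
  show "(k, l) \<in> harcs (Suc g)"
  proof (cases "c = c'")
    case True
    then have "k = k'" "l = l'" using eq by (auto intro: hemb_inj[OF c])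
    then show ?thesis using arc by simp
  next
    case False
    have "k < 2 \<and> k' < 2" "l < 2 \<and> l' < 2"
      using hemb_eq_imp_hubs[OF c arc(2) False] k l k'l' eq by auto
    moreover have "k \<noteq> l"
    proof
      assume "k = l"
      then have "hemb ?m c' k' = hemb ?m c' l'" using eq by simp
      then have "k' = l'" by (rule hemb_inj[OF arc(2)])
      then show False using arc(1) k'l'(3) by simp
    qed
    ultimately show ?thesis
      using copies_share_at_most_one_hub[OF c arc(2) False] eq by blast
  qed
qed (auto simp: mem_harcs_Suc_Suc c)

lemma oriented_graph_harcs: "oriented_graph (hnv (Suc g)) (harcs (Suc g))"
proof (induction g)
  case 0
  show ?case by (auto simp: oriented_graph_def)
next
  case (Suc g)
  let ?m = "hnv (Suc g)"
  have arc_bounds: "k < ?m" "l < ?m" if "(k, l) \<in> harcs (Suc g)" for k l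
    using Suc.IH that unfolding oriented_graph_def by auto
  show ?case
    unfolding oriented_graph_def
  proof (intro conjI allI impI subrelI)
    fix u v assume "(u, v) \<in> harcs (Suc (Suc g))"
    then obtain c k l where "c < 4" "(k, l) \<in> harcs (Suc g)" "u = hemb ?m c k" "v = hemb ?m c l"
      unfolding mem_harcs_Suc_Suc by blast
    then show "(u, v) \<in> {..<hnv (Suc (Suc g))} \<times> {..<hnv (Suc (Suc g))}"
      using hemb_less[of ?m c] hnv_Suc_ge_4[of g] arc_bounds by auto
  next
    fix u v assume "(u, v) \<in> harcs (Suc (Suc g))"
    then obtain c k l where c: "c < 4" and arc: "(k, l) \<in> harcs (Suc g)"
      and uv: "u = hemb ?m c k" "v = hemb ?m c l"
      unfolding mem_harcs_Suc_Suc by blast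
    have "(l, k) \<notin> harcs (Suc g)" using Suc.IH arc unfolding oriented_graph_def by blast
    then show "(v, u) \<notin> harcs (Suc (Suc g))"
      unfolding uv using hemb_mem_harcs_Suc_Suc_iff[OF Suc.IH c] arc_bounds[OF arc] by simp
  qed
qed

lemma skewA_Suc_swap:
  assumes "u < hnv (Suc g)" "v < hnv (Suc g)"
  shows "skewA (Suc g) $$ (v, u) = - skewA (Suc g) $$ (u, v)"
  using assms oriented_graph_harcs[of g] unfolding skewA_def oriented_graph_def by auto

lemma skewA_Suc_diag: "u < hnv (Suc g) \<Longrightarrow> skewA (Suc g) $$ (u, u) = 0"
  using skewA_Suc_swap[of u g u] by simp

lemma skewA_Suc_Suc_hemb:
  assumes "c < 4" "k < hnv (Suc g)" "l < hnv (Suc g)"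
  shows "skewA (Suc (Suc g)) $$ (hemb (hnv (Suc g)) c k, hemb (hnv (Suc g)) c l)
    = skewA (Suc g) $$ (k, l)"
  using assms hemb_less[of "hnv (Suc g)" c] hnv_Suc_ge_4[of g]
    hemb_mem_harcs_Suc_Suc_iff[OF oriented_graph_harcs assms]
    hemb_mem_harcs_Suc_Suc_iff[OF oriented_graph_harcs assms(1,3,2)]
  unfolding skewA_def by simp

lemma skewA_Suc_Suc_no_common_copy:
  assumes "u < hnv (Suc (Suc g))" "v < hnv (Suc (Suc g))"
    and "\<not> (\<exists>c<4. \<exists>k<hnv (Suc g). \<exists>l<hnv (Suc g).
      u = hemb (hnv (Suc g)) c k \<and> v = hemb (hnv (Suc g)) c l)"
  shows "skewA (Suc (Suc g)) $$ (u, v) = 0"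
proof -
  have "(u, v) \<notin> harcs (Suc (Suc g))" "(v, u) \<notin> harcs (Suc (Suc g))"
    using assms(3) oriented_graph_harcs[of g] unfolding mem_harcs_Suc_Suc oriented_graph_def by blast+
  then show ?thesis unfolding skewA_def using assms(1,2) by simp
qed

lemma skewA_Suc_Suc_hubs:
  assumes "h < 2" "h' < 2"
  shows "skewA (Suc (Suc g)) $$ (2 + h, 2 + h') = skewA (Suc g) $$ (h, h')"
proof -
  have "hemb (hnv (Suc g)) 1 k = 2 + k" if "k < 2" for k
    using that by (auto simp: hemb_def less_2_cases_iff)
  then show ?thesis
    using assms skewA_Suc_Suc_hemb[of 1 h g h'] hnv_Suc_ge_4[of g] by simp
qed

lemma skewA_Suc_Suc_hub_interior:
  assumes h: "h < 2" and d: "d < 4" and t: "t < hnv (Suc g) - 2"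
  shows "skewA (Suc (Suc g)) $$ (2 + h, 4 + d * (hnv (Suc g) - 2) + t)
    = (if d = h then skewA (Suc g) $$ (1, t + 2)
       else if d = Suc h then skewA (Suc g) $$ (0, t + 2) else 0)"
proof -
  let ?m = "hnv (Suc g)"
  have m: "4 \<le> ?m" by (rule hnv_Suc_ge_4)
  have interior: "4 + d * (?m - 2) + t = hemb ?m d (t + 2)" by (simp add: hemb_interior)
  consider "d = h" | "d = Suc h" | "d \<noteq> h" "d \<noteq> Suc h" by blast
  then show ?thesis
  proof cases
    case 1
    then have "hemb ?m d 1 = 2 + h" using hemb_eq_hub_iff[OF h d] by simp
    then show ?thesis using 1 interior skewA_Suc_Suc_hemb[OF d, of 1 g "t + 2"] m t by simp
  next
    case 2
    then have "hemb ?m d 0 = 2 + h" using hemb_eq_hub_iff[OF h d] by simp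
    then show ?thesis using 2 interior skewA_Suc_Suc_hemb[OF d, of 0 g "t + 2"] m t by simp
  next
    case 3
    have "\<not> (\<exists>c<4. \<exists>k<?m. \<exists>l<?m. 2 + h = hemb ?m c k \<and> 4 + d * (?m - 2) + t = hemb ?m c l)"
      using 3 hemb_eq_hub_iff[OF h] hemb_eq_interior_iff[OF _ _ t] by metis
    moreover have "2 + h < hnv (Suc (Suc g))" "4 + d * (?m - 2) + t < hnv (Suc (Suc g))"
      using h m hemb_less[OF _ d, of ?m "t + 2"] t interior by auto
    ultimately show ?thesis using 3 skewA_Suc_Suc_no_common_copy by simp
  qed
qed

lemma skewA_Suc_Suc_interiors:
  assumes d: "d < 4" "d' < 4" and t: "t < hnv (Suc g) - 2" "t' < hnv (Suc g) - 2"
  shows "skewA (Suc (Suc g)) $$ (4 + d * (hnv (Suc g) - 2) + t, 4 + d' * (hnv (Suc g) - 2) + t')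
    = (if d = d' then skewA (Suc g) $$ (t + 2, t' + 2) else 0)"
proof -
  let ?m = "hnv (Suc g)"
  have m: "4 \<le> ?m" by (rule hnv_Suc_ge_4)
  have interior: "4 + e * (?m - 2) + s = hemb ?m e (s + 2)" for e s by (simp add: hemb_interior)
  show ?thesis
  proof (cases "d = d'")
    case True
    then show ?thesis using interior skewA_Suc_Suc_hemb[OF d(1), of "t + 2" g "t' + 2"] t by simp
  next
    case False
    have "\<not> (\<exists>c<4. \<exists>k<?m. \<exists>l<?m.
        4 + d * (?m - 2) + t = hemb ?m c k \<and> 4 + d' * (?m - 2) + t' = hemb ?m c l)"
      using False hemb_eq_interior_iff[OF _ _ t(1)] hemb_eq_interior_iff[OF _ _ t(2)] by metis
    moreover have "4 + e * (?m - 2) + s < hnv (Suc (Suc g))" if "e < 4" "s < ?m - 2" for e s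
      using hemb_less[OF _ that(1), of ?m "s + 2"] m that interior by simp
    ultimately show ?thesis using False skewA_Suc_Suc_no_common_copy d t by simp
  qed
qed

section \<open>Block structure of A_g and K_{g+1}\<close>

abbreviation hub_arc :: "nat \<Rightarrow> int" where
  "hub_arc g \<equiv> skewA g $$ (0, 1)"

abbreviation hub_row :: "nat \<Rightarrow> nat \<Rightarrow> nat \<Rightarrow> int" where
  "hub_row g h \<equiv> (\<lambda>t. skewA g $$ (h, t + 2))"

lemma Kmat_carrier: "Kmat g \<in> carrier_mat (hnv g - 2) (hnv g - 2)"
  by (simp add: Kmat_def)

lemma index_Kmat:
  "i < hnv g - 2 \<Longrightarrow> j < hnv g - 2 \<Longrightarrow> Kmat g $$ (i, j) = skewA g $$ (i + 2, j + 2)"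
  by (simp add: Kmat_def)

lemma Kmat_Suc_skew: "transpose_mat (Kmat (Suc g)) = - Kmat (Suc g)"
proof (rule eq_matI)
  fix i j assume "i < dim_row (- Kmat (Suc g))" "j < dim_col (- Kmat (Suc g))"
  then show "transpose_mat (Kmat (Suc g)) $$ (i, j) = (- Kmat (Suc g)) $$ (i, j)"
    using skewA_Suc_swap[of "i + 2" g "j + 2"] by (simp add: Kmat_def)
qed (simp_all add: Kmat_def)

lemma skewA_Suc_hubs:
  assumes "h < 2" "h' < 2"
  shows "skewA (Suc g) $$ (h, h') = hub_block (hub_arc (Suc g)) $$ (h, h')"
  using assms hnv_Suc_ge_4[of g] skewA_Suc_swap[of 0 g 1] skewA_Suc_diag[of 0 g] skewA_Suc_diag[of 1 g]
  by (auto simp: hub_block_def less_2_cases_iff)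

lemma less_two_plus_blocks_cases [consumes 1, case_names hub interior]:
  fixes i k n :: nat
  assumes "i < 2 + k * n"
  obtains (hub) "i < 2" | (interior) d t where "d < k" "t < n" "i = 2 + d * n + t"
proof (cases "i < 2")
  case False
  then have "0 < n" using assms by (cases "n = 0") auto
  then have "(i - 2) div n < k" "(i - 2) mod n < n" "i = 2 + (i - 2) div n * n + (i - 2) mod n"
    using assms False by (auto simp: less_mult_imp_div_less mult.commute[of k])
  then show ?thesis using interior by blast
qed

lemma skewA_Suc_eq_bordered_mat:
  "skewA (Suc g) = bordered_mat (hub_arc (Suc g)) (hub_row (Suc g) 0) (hub_row (Suc g) 1) (Kmat (Suc g))"
  (is "_ = ?B")
proof -
  let ?n = "hnv (Suc g) - 2"
  have m: "4 \<le> hnv (Suc g)" by (rule hnv_Suc_ge_4)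
  note index = index_bordered_mat[OF Kmat_carrier[of "Suc g"],
      where a = "hub_arc (Suc g)" and x = "hub_row (Suc g) 0" and y = "hub_row (Suc g) 1"]
  have "?B \<in> carrier_mat (2 + ?n) (2 + ?n)"
    by (rule bordered_mat_carrier[OF Kmat_carrier])
  then have dims: "dim_row ?B = 2 + ?n" "dim_col ?B = 2 + ?n" "dim_row (skewA (Suc g)) = 2 + ?n"
    "dim_col (skewA (Suc g)) = 2 + ?n"
    using m by (simp_all add: skewA_def)
  show ?thesis
  proof (rule eq_matI)
    fix i j assume "i < dim_row ?B" "j < dim_col ?B"
    then have ij: "i < 2 + 1 * ?n" "j < 2 + 1 * ?n"
      unfolding dims by simp_all
    show "skewA (Suc g) $$ (i, j) = ?B $$ (i, j)"
    using ij(1) proof (cases rule: less_two_plus_blocks_cases)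
      case hub
      show ?thesis
      using ij(2) proof (cases rule: less_two_plus_blocks_cases)
        case hub': hub
        show ?thesis using hub hub' index(1) by (simp only: skewA_Suc_hubs[OF hub hub'])
      next
        case (interior d t)
        then show ?thesis using hub index(2)[of i t] by (auto simp: less_2_cases_iff add.commute)
      qed
    next
      case (interior d t)
      show ?thesis
      using ij(2) proof (cases rule: less_two_plus_blocks_cases)
        case hub
        then show ?thesis using interior index(3)[of t j] skewA_Suc_swap[of j g "t + 2"]
          by (auto simp: less_2_cases_iff add.commute)
      next
        case interior': (interior d' t')
        then show ?thesis using interior index(4)[of t t'] by (simp add: index_Kmat add.commute)
      qed
    qed
  qed (simp_all only: dims)
qed

lemma Kmat_Suc_Suc:
  "Kmat (Suc (Suc g)) = four_block_mat
     (chained_mat (hub_arc (Suc g)) (hub_row (Suc g) 0) (hub_row (Suc g) 1) (Kmat (Suc g)))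
     (0\<^sub>m (2 + 3 * (hnv (Suc g) - 2)) (hnv (Suc g) - 2))
     (0\<^sub>m (hnv (Suc g) - 2) (2 + 3 * (hnv (Suc g) - 2)))
     (Kmat (Suc g))"
  (is "_ = ?F")
proof -
  let ?m = "hnv (Suc g)"
  let ?n = "?m - 2"
  have m: "4 \<le> ?m" by (rule hnv_Suc_ge_4)
  note index = index_four_block_chained_mat[OF Kmat_carrier[of "Suc g"],
      where a = "hub_arc (Suc g)" and x = "hub_row (Suc g) 0" and y = "hub_row (Suc g) 1"]
  note C = chained_mat_carrier[OF Kmat_carrier[of "Suc g"],
      where a = "hub_arc (Suc g)" and x = "hub_row (Suc g) 0" and y = "hub_row (Suc g) 1"]
  have dims: "dim_row ?F = 2 + 4 * ?n" "dim_col ?F = 2 + 4 * ?n"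
    "dim_row (Kmat (Suc (Suc g))) = 2 + 4 * ?n" "dim_col (Kmat (Suc (Suc g))) = 2 + 4 * ?n"
    using C m by (simp_all add: Kmat_def)
  have K_bound: "u + 2 < hnv (Suc (Suc g))" if "u < 2 + 4 * ?n" for u
    using that m by simp
  show ?thesis
  proof (rule eq_matI)
    fix i j assume "i < dim_row ?F" "j < dim_col ?F"
    then have ij: "i < 2 + 4 * ?n" "j < 2 + 4 * ?n" unfolding dims by simp_all
    then have K: "Kmat (Suc (Suc g)) $$ (i, j) = skewA (Suc (Suc g)) $$ (i + 2, j + 2)"
      using m by (simp add: Kmat_def)
    show "Kmat (Suc (Suc g)) $$ (i, j) = ?F $$ (i, j)"
    using ij(1) proof (cases rule: less_two_plus_blocks_cases)
      case hub
      show ?thesis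
      using ij(2) proof (cases rule: less_two_plus_blocks_cases)
        case hub': hub
        have "Kmat (Suc (Suc g)) $$ (i, j) = skewA (Suc (Suc g)) $$ (2 + i, 2 + j)"
          using K by (simp add: add.commute)
        also have "\<dots> = skewA (Suc g) $$ (i, j)" by (rule skewA_Suc_Suc_hubs[OF hub hub'])
        also have "\<dots> = hub_block (hub_arc (Suc g)) $$ (i, j)" by (rule skewA_Suc_hubs[OF hub hub'])
        also have "\<dots> = ?F $$ (i, j)" by (rule index(1)[OF hub hub', symmetric])
        finally show ?thesis .
      next
        case (interior d t)
        have "j + 2 = 4 + d * ?n + t" using interior(3) by simp
        then have "Kmat (Suc (Suc g)) $$ (i, j) = skewA (Suc (Suc g)) $$ (2 + i, 4 + d * ?n + t)"
          unfolding K by (simp only: add.commute[of i 2])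
        also have "\<dots> = (if d = i then skewA (Suc g) $$ (1, t + 2)
            else if d = Suc i then skewA (Suc g) $$ (0, t + 2) else 0)"
          by (rule skewA_Suc_Suc_hub_interior[OF hub interior(1,2)])
        also have "\<dots> = ?F $$ (i, j)"
          unfolding interior(3) by (rule index(2)[OF hub interior(1,2), symmetric])
        finally show ?thesis .
      qed
    next
      case (interior d t)
      show ?thesis
      using ij(2) proof (cases rule: less_two_plus_blocks_cases)
        case hub
        have "i + 2 = 4 + d * ?n + t" using interior(3) by simp
        then have "Kmat (Suc (Suc g)) $$ (i, j) = skewA (Suc (Suc g)) $$ (4 + d * ?n + t, 2 + j)"
          unfolding K by (simp only: add.commute[of j 2])
        also have "\<dots> = - skewA (Suc (Suc g)) $$ (2 + j, 4 + d * ?n + t)"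
          using K_bound[OF ij(1)] K_bound[OF ij(2)] interior(3)
          by (intro skewA_Suc_swap) (simp_all add: add.commute)
        also have "\<dots> = - (if d = j then skewA (Suc g) $$ (1, t + 2)
            else if d = Suc j then skewA (Suc g) $$ (0, t + 2) else 0)"
          by (simp only: skewA_Suc_Suc_hub_interior[OF hub interior(1,2)])
        also have "\<dots> = ?F $$ (i, j)"
          unfolding interior(3) by (rule index(3)[OF hub interior(1,2), symmetric])
        finally show ?thesis .
      next
        case interior': (interior d' t')
        have "i + 2 = 4 + d * ?n + t" "j + 2 = 4 + d' * ?n + t'"
          using interior(3) interior'(3) by simp_all
        then have "Kmat (Suc (Suc g)) $$ (i, j)
            = skewA (Suc (Suc g)) $$ (4 + d * ?n + t, 4 + d' * ?n + t')"
          unfolding K by (simp only:)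
        also have "\<dots> = (if d = d' then skewA (Suc g) $$ (t + 2, t' + 2) else 0)"
          by (rule skewA_Suc_Suc_interiors[OF interior(1) interior'(1) interior(2) interior'(2)])
        also have "\<dots> = (if d = d' then Kmat (Suc g) $$ (t, t') else 0)"
          using index_Kmat[OF interior(2) interior'(2)] by simp
        also have "\<dots> = ?F $$ (i, j)"
          unfolding interior(3) interior'(3)
          by (rule index(4)[OF interior(1) interior'(1) interior(2) interior'(2), symmetric])
        finally show ?thesis .
      qed
    qed
  qed (simp_all only: dims)
qed

theorem lemma7:
  fixes g :: nat
  assumes "g \<ge> 1"
  shows "det (Kmat (g + 1)) = (det (Kmat g)) ^ 3 * det (skewA g)"
proof -
  obtain h where g: "g = Suc h" using assms by (cases g) auto
  let ?M = "chained_mat (hub_arc (Suc h)) (hub_row (Suc h) 0) (hub_row (Suc h) 1) (Kmat (Suc h))"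
  have "det (Kmat (Suc (Suc h))) = det ?M * det (Kmat (Suc h))"
    unfolding Kmat_Suc_Suc
    by (rule det_four_block_mat_lower_left_zero[OF chained_mat_carrier[OF Kmat_carrier] _ refl Kmat_carrier])
      simp
  also have "\<dots> = det (Kmat (Suc h)) ^ 3
      * det (bordered_mat (hub_arc (Suc h)) (hub_row (Suc h) 0) (hub_row (Suc h) 1) (Kmat (Suc h)))"
    by (rule det_chained_mat_int[OF Kmat_carrier Kmat_Suc_skew])
  also have "bordered_mat (hub_arc (Suc h)) (hub_row (Suc h) 0) (hub_row (Suc h) 1) (Kmat (Suc h))
      = skewA (Suc h)"
    by (rule skewA_Suc_eq_bordered_mat[symmetric])
  finally show ?thesis unfolding g by simp
qed

end
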